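(* Consider the following random variables, all mutually independent. For $i\in\{0,1,2\}$, $\gamma_i=P|h_i|^2$ where $P>0$ and $h_i\sim\mathcal{CN}(0,\Omega_i)$ with $\Omega_i>0$, so $\gamma_i$ is exponential with mean $\bar\gamma_i=P\Omega_i$. For $N\in\{T_1,R\}$, $\Gamma_N=\sum_{k=1}^{L_N}P_{I,N}|c_{N,k}|^2$ with integers $L_N\ge 1$, $P_{I,N}>0$ and $c_{N,k}\sim\mathcal{CN}(0,\Omega_{N,k})$, $\Omega_{N,k}>0$. Put $\xi_{N,k}=P_{I,N}\Omega_{N,k}$ and assume that for each $N$ the numbers $\xi_{N,1},\dots,\xi_{N,L_N}$ are pairwise distinct. Let $\phi_{N,k}=\xi_{N,k}^{L_N-2}\prod_{i=1,i\neq k}^{L_N}\frac{1}{\xi_{N,k}-\xi_{N,i}}$ (so that $\phi_{N,1}=1/\xi_{N,1}$ when $L_N=1$), i.e. the coefficients for which the density of $\Gamma_N$ is $\sum_{k}\phi_{N,k}e^{-t/\xi_{N,k}}$, $t\ge0$. Let $\omega_1,\omega_2\in(0,1)$ with $\omega_1+\omega_2=1$, and define $$\Upsilon_{T_1}^{\rm UB}=\frac{\gamma_0}{\Gamma_{T_1}+1}+\min\left\{\frac{\gamma_1}{\Gamma_{T_1}+1},\ \frac{\omega_2\gamma_2}{\Gamma_R+\omega_1\Gamma_{T_1}+\omega_1+1}\right\},$$ with CDF $F(\gamma)=\Pr(\Upsilon_{T_1}^{\rm UB}<\gamma)$. Let $\lambda_1=\frac{1}{\bar\gamma_1}+\frac{\omega_1}{\omega_2\bar\gamma_2}$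 and $\lambda_2=\frac{1}{\bar\gamma_1}+\frac{\omega_1+1}{\omega_2\bar\gamma_2}$. Then, as $\gamma\to0^+$, $F(\gamma)=K\gamma^2+o(\gamma^2)$, where $$K=\frac{1}{2\bar\gamma_0}\left(\sum_{j=1}^{L_{T_1}}\sum_{k=1}^{L_R}\phi_{T_1,j}\phi_{R,k}\frac{\xi_{R,k}^2}{\omega_2\bar\gamma_2}\left(\xi_{T_1,j}+\xi_{T_1,j}^2\right)+\sum_{j=1}^{L_{T_1}}\phi_{T_1,j}\left(\lambda_2\xi_{T_1,j}+(\lambda_1+\lambda_2)\xi_{T_1,j}^2+2\lambda_1\xi_{T_1,j}^3\right)\right).$$
   Context: This is the model of a three-phase amplify-and-forward two-way relay network with terminals $T_1,T_2$ and relay $R$ under co-channel interference: $h_0,h_1,h_2$ are the $T_1$–$T_2$, $T_1$–$R$, $T_2$–$R$ channel coefficients, $P$ is the common transmit power, $\Gamma_N$ is the total instantaneous interference power at node $N$ (from $L_N$ interferers of power $P_{I,N}$), and $\omega_1,\omega_2$ are the relay's power-allocation coefficients. $\Upsilon_{T_1}^{\rm UB}$ is an upper bound on the received SINR at $T_1$. $o(\gamma^2)$ denotes a quantity $g(\gamma)$ with $g(\gamma)/\gamma^2\to0$. *)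

theory Defs
  imports "HOL-Probability.Probability" "HOL-Library.Landau_Symbols"
begin

text \<open>Indices of the mutually independent random variables:
  G0, G1, G2 are the SNR variables gamma_0, gamma_1, gamma_2;
  ITk k is the k-th interferer power P_{I,T1} |c_{T1,k}|^2 at T1;
  IRk k is the k-th interferer power P_{I,R} |c_{R,k}|^2 at R.\<close>
datatype rv = G0 | G1 | G2 | ITk nat | IRk nat

text \<open>phi_{N,k} = xi_k^(L-2) * prod_{i in 1..L, i ~= k} 1/(xi_k - xi_i), with integer
  exponent so that L = 1 gives 1/xi_1.\<close>
definition phi :: "(nat \<Rightarrow> real) \<Rightarrow> nat \<Rightarrow> nat \<Rightarrow> real" where
  "phi xi L k = xi k powi (int L - 2) * (\<Prod>i\<in>{1..L} - {k}. 1 / (xi k - xi i))"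

end

theory Submission
  imports Defs "HOL-Real_Asymp.Real_Asymp"
begin

text \<open>Given \<open>G0\<close> and the interference powers \<open>g = \<Gamma>\<^sub>T\<^sub>1\<close>, \<open>r = \<Gamma>\<^sub>R\<close>, the two terms of the
  minimum are independent exponentials, so the minimum is exponential with rate
  \<open>b = (g + 1) / \<gamma>\<^sub>1 + (r + \<omega>\<^sub>1 g + \<omega>\<^sub>1 + 1) / (\<omega>\<^sub>2 \<gamma>\<^sub>2)\<close>, writing \<open>\<gamma>\<^sub>i\<close> for the mean SNRs. Integrating out
  \<open>G2\<close>, \<open>G1\<close>, \<open>G0\<close> in turn writes \<open>F \<gamma>\<close> as the expectation over the interference of the CDF of
  \<open>V / (g + 1) + W\<close> with \<open>V \<sim> Exp(1 / \<gamma>\<^sub>0)\<close>, \<open>W \<sim> Exp(b)\<close>. That CDF is \<open>(g + 1) b / \<gamma>\<^sub>0 \<cdot> \<gamma>\<^sup>2 / 2\<close>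
  up to an error \<open>O(\<gamma>\<^sup>3)\<close> whose coefficient is a cubic polynomial in \<open>g, r\<close>, hence integrable. So
  \<open>2 K\<close> is the expectation of a quadratic in \<open>g, r\<close>, which only involves first and second moments
  of the interference; the \<open>\<phi>\<close>-sums in \<open>K\<close> are these moments in disguise, by the partial-fraction
  identities \<open>\<Sum>\<^sub>k \<phi>\<^sub>k \<xi>\<^sub>k\<^sup>p = h\<^sub>p\<^sub>-\<^sub>1(\<xi>)\<close> (complete homogeneous symmetric polynomials).\<close>

section \<open>The CDF of a sum of two exponentials near zero\<close>

lemma exp_minus_le_quadratic:
  fixes x :: real
  assumes "0 \<le> x"
  shows "exp (- x) \<le> 1 - x + x\<^sup>2 / 2"
proof -
  let ?f = "\<lambda>x::real. 1 - x + x\<^sup>2 / 2 - exp (- x)"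
  have "?f 0 \<le> ?f x"
  proof (rule DERIV_nonneg_imp_increasing_open[of 0 x ?f])
    fix y :: real
    have "(?f has_real_derivative (- 1 + y + exp (- y))) (at y)"
      by (auto intro!: derivative_eq_intros simp: power2_eq_square algebra_simps)
    moreover have "0 \<le> - 1 + y + exp (- y)"
      using exp_ge_add_one_self[of "- y"] by simp
    ultimately show "\<exists>y'. (?f has_real_derivative y') (at y) \<and> 0 \<le> y'"
      by blast
  next
    show "continuous_on {0..x} ?f"
      by (auto intro!: continuous_intros)
  qed (use assms in auto)
  then show ?thesis
    using assms by (cases "x = 0") auto
qed

lemma exp_mult_one_minus_exp_bounds:
  fixes x y :: real
  assumes x: "0 \<le> x" and y: "0 \<le> y"
  shows "exp (- y) * (1 - exp (- x)) \<le> x"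
    and "x - x\<^sup>2 / 2 - y * x \<le> exp (- y) * (1 - exp (- x))"
proof -
  have lin: "1 - exp (- x) \<le> x"
    using exp_ge_add_one_self[of "- x"] by simp
  have nonneg: "0 \<le> 1 - exp (- x)"
    using x by simp
  show "exp (- y) * (1 - exp (- x)) \<le> x"
    using mult_mono[OF _ lin, of "exp (- y)" 1] nonneg x y by simp
  have "x - x\<^sup>2 / 2 - y * x \<le> (1 - exp (- x)) - y * (1 - exp (- x))"
    using exp_minus_le_quadratic[OF x] mult_left_mono[OF lin y] by simp
  also have "\<dots> \<le> exp (- y) * (1 - exp (- x))"
    using mult_right_mono[OF _ nonneg, of "1 - y" "exp (- y)"] exp_ge_add_one_self[of "- y"]
    by (simp add: algebra_simps)
  finally show "x - x\<^sup>2 / 2 - y * x \<le> exp (- y) * (1 - exp (- x))" .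
qed

lemma integral_quadratic_atLeastAtMost:
  fixes c0 c1 c2 L :: real
  assumes "0 \<le> L"
  shows "(\<integral>v. (c0 + c1 * v + c2 * v\<^sup>2) * indicator {0..L} v \<partial>lborel)
           = c0 * L + c1 * L\<^sup>2 / 2 + c2 * L ^ 3 / 3"
proof -
  have "(\<integral>v. (c0 + c1 * v + c2 * v\<^sup>2) * indicator {0..L} v \<partial>lborel)
      = (\<lambda>v. c0 * v + c1 * v\<^sup>2 / 2 + c2 * v ^ 3 / 3) L - (\<lambda>v. c0 * v + c1 * v\<^sup>2 / 2 + c2 * v ^ 3 / 3) 0"
    using assms
    by (intro integral_FTC_Icc_real)
       (auto intro!: derivative_eq_intros continuous_intros
             simp: power2_eq_square power3_eq_cube algebra_simps)
  then show ?thesis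
    by simp
qed

text \<open>The probability that \<open>V / s + W < \<gamma>\<close> for independent \<open>V \<sim> Exp(l)\<close> and \<open>W \<sim> Exp(b)\<close>.\<close>
definition exp_sum_cdf :: "real \<Rightarrow> real \<Rightarrow> real \<Rightarrow> real \<Rightarrow> real" where
  "exp_sum_cdf l s b \<gamma> = (\<integral>v. exponential_density l v * (1 - exp (- max (\<gamma> - v / s) 0 * b)) \<partial>lborel)"

lemma exp_sum_cdf_measurable [measurable]:
  assumes [measurable]: "s \<in> borel_measurable N" "b \<in> borel_measurable N"
  shows "(\<lambda>x. exp_sum_cdf l (s x) (b x) \<gamma>) \<in> borel_measurable N"
  unfolding exp_sum_cdf_def by (rule lborel.borel_measurable_lebesgue_integral) measurable

definition exp_sum_integrand :: "real \<Rightarrow> real \<Rightarrow> real \<Rightarrow> real \<Rightarrow> real \<Rightarrow> real" where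
  "exp_sum_integrand l s b \<gamma> v = l * exp (- (l * v)) * (1 - exp (- (b * (\<gamma> - v / s))))"

lemma exp_sum_cdf_eq_integral_Icc:
  fixes l s b \<gamma> :: real
  assumes "0 < s"
  shows "exp_sum_cdf l s b \<gamma> = (\<integral>v. exp_sum_integrand l s b \<gamma> v * indicator {0..s * \<gamma>} v \<partial>lborel)"
  unfolding exp_sum_cdf_def
proof (intro Bochner_Integration.integral_cong refl)
  fix v :: real
  have "v \<le> s * \<gamma> \<longleftrightarrow> 0 \<le> \<gamma> - v / s"
    using assms by (simp add: field_simps)
  then show "exponential_density l v * (1 - exp (- max (\<gamma> - v / s) 0 * b))
               = exp_sum_integrand l s b \<gamma> v * indicator {0..s * \<gamma>} v"
    by (auto simp: exp_sum_integrand_def exponential_density_def max_def indicator_def mult.commute)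
qed

lemma integrable_exp_sum_integrand:
  "0 < s \<Longrightarrow> integrable lborel (\<lambda>v. exp_sum_integrand l s b \<gamma> v * indicator {0..L} v)"
  unfolding exp_sum_integrand_def by (intro borel_integrable_atLeastAtMost) (auto intro!: continuous_intros)

lemma integrable_quadratic_atLeastAtMost:
  "integrable lborel (\<lambda>v::real. (c0 + c1 * v + c2 * v\<^sup>2) * indicator {0..L} v)"
  by (intro borel_integrable_atLeastAtMost) (auto intro!: continuous_intros)

lemma exp_sum_integrand_bounds:
  fixes l s b \<gamma> v :: real
  assumes l: "0 < l" and s: "0 < s" and b: "0 \<le> b" and v: "v \<in> {0..s * \<gamma>}"
  defines "x \<equiv> b * (\<gamma> - v / s)"
  shows "l * (x - x\<^sup>2 / 2 - l * v * x) \<le> exp_sum_integrand l s b \<gamma> v"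
    and "exp_sum_integrand l s b \<gamma> v \<le> l * x"
    and "0 \<le> exp_sum_integrand l s b \<gamma> v"
proof -
  have "v / s \<le> \<gamma>"
    using v s by (simp add: field_simps)
  then have "0 \<le> x" "0 \<le> l * v"
    using v b l by (auto simp: x_def)
  then show "l * (x - x\<^sup>2 / 2 - l * v * x) \<le> exp_sum_integrand l s b \<gamma> v"
    and "exp_sum_integrand l s b \<gamma> v \<le> l * x"
    and "0 \<le> exp_sum_integrand l s b \<gamma> v"
    using exp_mult_one_minus_exp_bounds[of x "l * v"] mult_left_mono[OF _ less_imp_le[OF l]] l
    by (auto simp: exp_sum_integrand_def x_def mult.assoc)
qed

lemma exp_sum_cdf_upper:
  fixes l s b \<gamma> :: real
  assumes l: "0 < l" and s: "0 < s" and b: "0 \<le> b" and \<gamma>: "0 \<le> \<gamma>"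
  shows "exp_sum_cdf l s b \<gamma> \<le> s * l * b * \<gamma>\<^sup>2 / 2"
proof -
  have "exp_sum_cdf l s b \<gamma> \<le> (\<integral>v. (l * b * \<gamma> + (- l * b / s) * v + 0 * v\<^sup>2) * indicator {0..s * \<gamma>} v \<partial>lborel)"
    unfolding exp_sum_cdf_eq_integral_Icc[OF s]
  proof (intro integral_mono integrable_exp_sum_integrand[OF s] integrable_quadratic_atLeastAtMost)
    fix v :: real
    show "exp_sum_integrand l s b \<gamma> v * indicator {0..s * \<gamma>} v
            \<le> (l * b * \<gamma> + (- l * b / s) * v + 0 * v\<^sup>2) * indicator {0..s * \<gamma>} v"
      using exp_sum_integrand_bounds(2)[OF l s b, of v \<gamma>] s
      by (auto simp: indicator_def field_simps)
  qed
  also have "\<dots> = l * b * \<gamma> * (s * \<gamma>) + (- l * b / s) * (s * \<gamma>)\<^sup>2 / 2 + 0 * (s * \<gamma>) ^ 3 / 3"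
    using s \<gamma> by (intro integral_quadratic_atLeastAtMost) simp
  also have "\<dots> = s * l * b * \<gamma>\<^sup>2 / 2"
    using s by (simp add: field_simps power2_eq_square)
  finally show ?thesis .
qed

lemma exp_sum_cdf_lower:
  fixes l s b \<gamma> :: real
  assumes l: "0 < l" and s: "0 < s" and b: "0 \<le> b" and \<gamma>: "0 \<le> \<gamma>"
  shows "s * l * b * \<gamma>\<^sup>2 / 2 - s * l * b * (s * l + b) * \<gamma> ^ 3 / 6 \<le> exp_sum_cdf l s b \<gamma>"
proof -
  define d0 where "d0 = l * (b * \<gamma> - b\<^sup>2 * \<gamma>\<^sup>2 / 2)"
  define d1 where "d1 = l * (- b / s + b\<^sup>2 * \<gamma> / s - l * b * \<gamma>)"
  define d2 where "d2 = l * (- (b\<^sup>2) / (2 * s\<^sup>2) + l * b / s)"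
  \<comment> \<open>\<open>d0 + d1 v + d2 v\<^sup>2\<close> is the lower bound of \<open>exp_sum_integrand_bounds\<close>, expanded in \<open>v\<close>.\<close>
  have "s * l * b * \<gamma>\<^sup>2 / 2 - s * l * b * (s * l + b) * \<gamma> ^ 3 / 6
          = d0 * (s * \<gamma>) + d1 * (s * \<gamma>)\<^sup>2 / 2 + d2 * (s * \<gamma>) ^ 3 / 3"
    using s by (simp add: d0_def d1_def d2_def field_simps power2_eq_square power3_eq_cube)
  also have "\<dots> = (\<integral>v. (d0 + d1 * v + d2 * v\<^sup>2) * indicator {0..s * \<gamma>} v \<partial>lborel)"
    using s \<gamma> by (intro integral_quadratic_atLeastAtMost[symmetric]) simp
  also have "\<dots> \<le> exp_sum_cdf l s b \<gamma>"
    unfolding exp_sum_cdf_eq_integral_Icc[OF s]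
  proof (intro integral_mono integrable_exp_sum_integrand[OF s] integrable_quadratic_atLeastAtMost)
    fix v :: real
    have "d0 + d1 * v + d2 * v\<^sup>2 = l * (b * (\<gamma> - v / s) - (b * (\<gamma> - v / s))\<^sup>2 / 2 - l * v * (b * (\<gamma> - v / s)))"
      using s by (simp add: d0_def d1_def d2_def field_simps power2_eq_square)
    then show "(d0 + d1 * v + d2 * v\<^sup>2) * indicator {0..s * \<gamma>} v
                 \<le> exp_sum_integrand l s b \<gamma> v * indicator {0..s * \<gamma>} v"
      using exp_sum_integrand_bounds(1)[OF l s b, of v \<gamma>] by (auto simp: indicator_def)
  qed
  finally show ?thesis .
qed

lemma exp_sum_cdf_nonneg:
  assumes "0 < l" "0 < s" "0 \<le> b"
  shows "0 \<le> exp_sum_cdf l s b \<gamma>"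
proof -
  have "0 \<le> exp_sum_integrand l s b \<gamma> v * indicator {0..s * \<gamma>} v" for v
    using exp_sum_integrand_bounds(3)[OF assms, of v \<gamma>] by (simp add: indicator_def)
  then show ?thesis
    unfolding exp_sum_cdf_eq_integral_Icc[OF assms(2)] by (simp add: integral_nonneg)
qed

lemma smallo_square_if_cubic_bound:
  fixes f :: "real \<Rightarrow> real"
  assumes "\<And>\<gamma>. 0 < \<gamma> \<Longrightarrow> \<bar>f \<gamma>\<bar> \<le> C * \<gamma> ^ 3"
  shows "f \<in> o[at_right 0](\<lambda>\<gamma>. \<gamma>\<^sup>2)"
proof (rule landau_o.big_small_trans)
  show "f \<in> O[at_right 0](\<lambda>\<gamma>. \<gamma> ^ 3)"
    using assms by (intro bigoI[of _ C] eventually_at_rightI[of 0 1]) auto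
  show "(\<lambda>\<gamma>::real. \<gamma> ^ 3) \<in> o[at_right 0](\<lambda>\<gamma>. \<gamma>\<^sup>2)"
    by real_asymp
qed

section \<open>Partial-fraction power sums\<close>

definition lagrange_power_sum :: "('i \<Rightarrow> real) \<Rightarrow> 'i set \<Rightarrow> nat \<Rightarrow> real" where
  "lagrange_power_sum x A m = (\<Sum>j\<in>A. x j ^ m / (\<Prod>i\<in>A - {j}. (x j - x i)))"

lemma lagrange_power_sum_Suc:
  assumes A: "finite A" and inj: "inj_on x A" and a: "a \<in> A"
  shows "lagrange_power_sum x A (Suc m) = x a * lagrange_power_sum x A m + lagrange_power_sum x (A - {a}) m"
proof -
  have "lagrange_power_sum x A (Suc m) - x a * lagrange_power_sum x A m
          = (\<Sum>j\<in>A. x j ^ m * (x j - x a) / (\<Prod>i\<in>A - {j}. (x j - x i)))"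
    unfolding lagrange_power_sum_def sum_distrib_left sum_subtractf[symmetric]
    by (intro sum.cong) (auto simp: diff_divide_distrib[symmetric] algebra_simps)
  also have "\<dots> = (\<Sum>j\<in>A - {a}. x j ^ m * (x j - x a) / (\<Prod>i\<in>A - {j}. (x j - x i)))"
    using A a by (subst sum.remove[of _ a]) auto
  also have "\<dots> = lagrange_power_sum x (A - {a}) m"
    unfolding lagrange_power_sum_def
  proof (intro sum.cong refl)
    fix j assume j: "j \<in> A - {a}"
    then have "x j - x a \<noteq> 0"
      using inj a by (auto dest: inj_onD)
    moreover have "A - {j} = insert a (A - {a} - {j})"
      using j a by auto
    ultimately show "x j ^ m * (x j - x a) / (\<Prod>i\<in>A - {j}. (x j - x i))
                       = x j ^ m / (\<Prod>i\<in>A - {a} - {j}. (x j - x i))"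
      using A by simp
  qed
  finally show ?thesis
    by simp
qed

lemma lagrange_power_sum_two_points:
  assumes "finite A" "inj_on x A" "a \<in> A" "b \<in> A"
  shows "(x a - x b) * lagrange_power_sum x A m
           = lagrange_power_sum x (A - {b}) m - lagrange_power_sum x (A - {a}) m"
  using lagrange_power_sum_Suc[OF assms(1-3), of m] lagrange_power_sum_Suc[OF assms(1,2,4), of m]
  by (simp add: algebra_simps)

lemma lagrange_power_sum_below_card:
  assumes "finite A" "inj_on x A" "m < card A"
  shows "lagrange_power_sum x A m = (if Suc m = card A then 1 else 0)"
  using assms
proof (induction "card A" arbitrary: A m rule: less_induct)
  case less
  note A = less.prems
  show ?case
  proof (cases "card A = 1")
    case True
    then obtain a where "A = {a}"
      using card_1_singletonE by blast
    then show ?thesis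
      using A(3) True by (simp add: lagrange_power_sum_def)
  next
    case False
    have "\<not> card A \<le> Suc 0"
      using False A(3) by linarith
    then obtain a b where ab: "a \<in> A" "b \<in> A" "a \<noteq> b"
      using card_le_Suc0_iff_eq[OF A(1)] by blast
    have IH: "lagrange_power_sum x (A - {c}) k = (if Suc k = card (A - {c}) then 1 else 0)"
      if "c \<in> A" "k < card (A - {c})" for c k
      using less.hyps[of "A - {c}" k] that A inj_on_subset[OF A(2), of "A - {c}"]
      by (auto intro: card_Diff1_less)
    have card_diff: "card (A - {c}) = card A - 1" if "c \<in> A" for c
      using that A by simp
    have zero: "lagrange_power_sum x A k = 0" if k: "Suc k < card A" for k
    proof -
      have "(x a - x b) * lagrange_power_sum x A k
              = lagrange_power_sum x (A - {b}) k - lagrange_power_sum x (A - {a}) k"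
        by (rule lagrange_power_sum_two_points[OF A(1,2) ab(1,2)])
      also have "\<dots> = 0"
        using IH[OF ab(1), of k] IH[OF ab(2), of k] k card_diff ab by simp
      finally show ?thesis
        using inj_onD[OF A(2) _ ab(1,2)] ab(3) by auto
    qed
    show ?thesis
    proof (cases "Suc m = card A")
      case True
      then obtain k where m: "m = Suc k"
        using False by (cases m) auto
      have "lagrange_power_sum x A (Suc k) = x a * lagrange_power_sum x A k + lagrange_power_sum x (A - {a}) k"
        by (rule lagrange_power_sum_Suc[OF A(1,2) ab(1)])
      then show ?thesis
        using zero[of k] IH[OF ab(1), of k] card_diff[OF ab(1)] True m by simp
    next
      case False
      then show ?thesis
        using zero[of m] A(3) by simp
    qed
  qed
qed

lemma lagrange_power_sum_card:
  assumes "finite A" "inj_on x A"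
  shows "lagrange_power_sum x A (card A) = sum x A"
  using assms
proof (induction A rule: finite_induct)
  case empty
  then show ?case
    by (simp add: lagrange_power_sum_def)
next
  case (insert a A)
  have "lagrange_power_sum x (insert a A) (Suc (card A))
          = x a * lagrange_power_sum x (insert a A) (card A) + lagrange_power_sum x A (card A)"
    using lagrange_power_sum_Suc[OF _ insert.prems, of a "card A"] insert.hyps by simp
  then show ?case
    using lagrange_power_sum_below_card[OF _ insert.prems, of "card A"] insert by auto
qed

lemma lagrange_power_sum_Suc_card:
  assumes "finite A" "inj_on x A"
  shows "lagrange_power_sum x A (Suc (card A)) = ((sum x A)\<^sup>2 + (\<Sum>i\<in>A. (x i)\<^sup>2)) / 2"
  using assms
proof (induction A rule: finite_induct)
  case empty
  then show ?case
    by (simp add: lagrange_power_sum_def)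
next
  case (insert a A)
  have "lagrange_power_sum x (insert a A) (Suc (Suc (card A)))
          = x a * lagrange_power_sum x (insert a A) (Suc (card A)) + lagrange_power_sum x A (Suc (card A))"
    using lagrange_power_sum_Suc[OF _ insert.prems, of a "Suc (card A)"] insert.hyps by simp
  also have "\<dots> = x a * (x a + sum x A) + ((sum x A)\<^sup>2 + (\<Sum>i\<in>A. (x i)\<^sup>2)) / 2"
    using lagrange_power_sum_card[OF _ insert.prems] insert by auto
  finally show ?case
    using insert.hyps by (simp add: power2_eq_square field_simps)
qed

lemma sum_phi_mult_power:
  assumes L: "1 \<le> L" and pos: "\<forall>k\<in>{1..L}. 0 < xi k" and p: "1 \<le> p"
  shows "(\<Sum>k\<in>{1..L}. phi xi L k * xi k ^ p) = lagrange_power_sum xi {1..L} (L + p - 2)"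
  unfolding lagrange_power_sum_def
proof (intro sum.cong refl)
  fix k assume k: "k \<in> {1..L}"
  have "xi k \<noteq> 0"
    using pos k by fastforce
  then have "xi k powi (int L - 2) * xi k ^ p = xi k powi (int L - 2 + int p)"
    by (simp add: power_int_add)
  also have "int L - 2 + int p = int (L + p - 2)"
    using L p by simp
  also have "xi k powi int (L + p - 2) = xi k ^ (L + p - 2)"
    by (rule power_int_of_nat)
  finally show "phi xi L k * xi k ^ p = xi k ^ (L + p - 2) / (\<Prod>i\<in>{1..L} - {k}. (xi k - xi i))"
    by (simp add: phi_def prod_dividef)
qed

lemma sum_phi_moments:
  assumes L: "1 \<le> L" and pos: "\<forall>k\<in>{1..L}. 0 < xi k" and inj: "inj_on xi {1..L}"
  shows "(\<Sum>k\<in>{1..L}. phi xi L k * xi k) = 1"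
    and "(\<Sum>k\<in>{1..L}. phi xi L k * (xi k)\<^sup>2) = (\<Sum>k\<in>{1..L}. xi k)"
    and "(\<Sum>k\<in>{1..L}. phi xi L k * xi k ^ 3) = ((\<Sum>k\<in>{1..L}. xi k)\<^sup>2 + (\<Sum>k\<in>{1..L}. (xi k)\<^sup>2)) / 2"
proof -
  have L': "L + 1 - 2 = L - 1" "L + 2 - 2 = L" "L + 3 - 2 = Suc L"
    using L by auto
  show "(\<Sum>k\<in>{1..L}. phi xi L k * xi k) = 1"
    using sum_phi_mult_power[OF L pos, of 1] lagrange_power_sum_below_card[OF _ inj, of "L - 1"] L L'
    by simp
  show "(\<Sum>k\<in>{1..L}. phi xi L k * (xi k)\<^sup>2) = (\<Sum>k\<in>{1..L}. xi k)"
    using sum_phi_mult_power[OF L pos, of 2] lagrange_power_sum_card[OF _ inj] L' by simp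
  show "(\<Sum>k\<in>{1..L}. phi xi L k * xi k ^ 3) = ((\<Sum>k\<in>{1..L}. xi k)\<^sup>2 + (\<Sum>k\<in>{1..L}. (xi k)\<^sup>2)) / 2"
    using sum_phi_mult_power[OF L pos, of 3] lagrange_power_sum_Suc_card[OF _ inj] L' by simp
qed

lemma sum_phi_second_order_coefficient:
  fixes xiT xiR :: "nat \<Rightarrow> real" and LT LR :: nat
  assumes LT: "1 \<le> LT" "\<forall>k\<in>{1..LT}. 0 < xiT k" "inj_on xiT {1..LT}"
    and LR: "1 \<le> LR" "\<forall>k\<in>{1..LR}. 0 < xiR k" "inj_on xiR {1..LR}"
    and l2: "l2 = l1 + 1 / c"
  defines "ST \<equiv> \<Sum>k\<in>{1..LT}. xiT k" and "QT \<equiv> \<Sum>k\<in>{1..LT}. (xiT k)\<^sup>2" and "SR \<equiv> \<Sum>k\<in>{1..LR}. xiR k"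
  shows "(\<Sum>j\<in>{1..LT}. \<Sum>k\<in>{1..LR}. phi xiT LT j * phi xiR LR k * ((xiR k)\<^sup>2 / c) * (xiT j + (xiT j)\<^sup>2))
           + (\<Sum>j\<in>{1..LT}. phi xiT LT j * (l2 * xiT j + (l1 + l2) * (xiT j)\<^sup>2 + 2 * l1 * xiT j ^ 3))
         = l1 * ((ST + 1)\<^sup>2 + QT) + (ST + 1) * (SR + 1) / c"
proof -
  note T = sum_phi_moments[OF LT] and R = sum_phi_moments[OF LR]
  have "(\<Sum>j\<in>{1..LT}. \<Sum>k\<in>{1..LR}. phi xiT LT j * phi xiR LR k * ((xiR k)\<^sup>2 / c) * (xiT j + (xiT j)\<^sup>2))
          = (\<Sum>j\<in>{1..LT}. \<Sum>k\<in>{1..LR}. (phi xiT LT j * xiT j + phi xiT LT j * (xiT j)\<^sup>2) * (phi xiR LR k * (xiR k)\<^sup>2 / c))"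
    by (intro sum.cong refl) (simp add: add_divide_distrib algebra_simps)
  also have "\<dots> = (\<Sum>j\<in>{1..LT}. phi xiT LT j * xiT j + phi xiT LT j * (xiT j)\<^sup>2) * (\<Sum>k\<in>{1..LR}. phi xiR LR k * (xiR k)\<^sup>2 / c)"
    by (rule sum_product[symmetric])
  also have "\<dots> = (1 + ST) * SR / c"
    using T R by (simp add: sum.distrib ST_def SR_def flip: sum_divide_distrib)
  finally have double: "(\<Sum>j\<in>{1..LT}. \<Sum>k\<in>{1..LR}. phi xiT LT j * phi xiR LR k * ((xiR k)\<^sup>2 / c) * (xiT j + (xiT j)\<^sup>2))
                          = (1 + ST) * SR / c" .
  have "(\<Sum>j\<in>{1..LT}. phi xiT LT j * (l2 * xiT j + (l1 + l2) * (xiT j)\<^sup>2 + 2 * l1 * xiT j ^ 3))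
          = l2 * (\<Sum>j\<in>{1..LT}. phi xiT LT j * xiT j) + (l1 + l2) * (\<Sum>j\<in>{1..LT}. phi xiT LT j * (xiT j)\<^sup>2)
            + 2 * l1 * (\<Sum>j\<in>{1..LT}. phi xiT LT j * xiT j ^ 3)"
    by (simp add: sum.distrib sum_distrib_left algebra_simps)
  also have "\<dots> = l2 + (l1 + l2) * ST + l1 * (ST\<^sup>2 + QT)"
    using T by (simp add: ST_def QT_def)
  finally show ?thesis
    using double l2 by (simp add: power2_eq_square add_divide_distrib algebra_simps)
qed

section \<open>Independence and exponential distributions\<close>

lemma (in prob_space) indep_var_integral_iterated:
  fixes Y Z :: "'a \<Rightarrow> 'b" and h :: "'b \<Rightarrow> 'b \<Rightarrow> real"
  assumes ind: "indep_var NY Y NZ Z"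
    and h[measurable]: "(\<lambda>(y, z). h y z) \<in> borel_measurable (NY \<Otimes>\<^sub>M NZ)"
    and h_bounded: "\<And>y z. \<bar>h y z\<bar> \<le> B"
    and g[measurable]: "g \<in> borel_measurable NZ"
    and Q[measurable]: "Measurable.pred NZ Q" and AE_Q: "AE \<omega> in M. Q (Z \<omega>)"
    and hg: "\<And>z. z \<in> space NZ \<Longrightarrow> Q z \<Longrightarrow> (\<integral>y. h y z \<partial>distr M NY Y) = g z"
  shows "(\<integral>\<omega>. h (Y \<omega>) (Z \<omega>) \<partial>M) = (\<integral>\<omega>. g (Z \<omega>) \<partial>M)"
proof -
  have [measurable]: "random_variable NY Y" "random_variable NZ Z"
    using indep_var_rv1[OF ind] indep_var_rv2[OF ind] .
  interpret PY: prob_space "distr M NY Y"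
    by (rule prob_space_distr) simp
  interpret PZ: prob_space "distr M NZ Z"
    by (rule prob_space_distr) simp
  interpret PP: pair_prob_space "distr M NY Y" "distr M NZ Z" ..
  have int: "integrable (distr M NY Y \<Otimes>\<^sub>M distr M NZ Z) (\<lambda>(y, z). h y z)"
  proof (rule PP.P.integrable_const_bound[where B = B])
    have "sets (distr M NY Y \<Otimes>\<^sub>M distr M NZ Z) = sets (NY \<Otimes>\<^sub>M NZ)"
      by (intro sets_pair_measure_cong) auto
    then show "(\<lambda>(y, z). h y z) \<in> borel_measurable (distr M NY Y \<Otimes>\<^sub>M distr M NZ Z)"
      using h measurable_cong_sets by blast
  qed (use h_bounded in auto)
  have "(\<integral>\<omega>. h (Y \<omega>) (Z \<omega>) \<partial>M) = (\<integral>p. (\<lambda>(y, z). h y z) p \<partial>distr M (NY \<Otimes>\<^sub>M NZ) (\<lambda>\<omega>. (Y \<omega>, Z \<omega>)))"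
    by (subst integral_distr) auto
  also have "\<dots> = (\<integral>p. (\<lambda>(y, z). h y z) p \<partial>(distr M NY Y \<Otimes>\<^sub>M distr M NZ Z))"
    using indep_var_distribution_eq[of NY Y NZ Z] ind by simp
  also have "\<dots> = (\<integral>z. (\<integral>y. h y z \<partial>distr M NY Y) \<partial>distr M NZ Z)"
    using PP.integral_snd[OF int] by simp
  also have "\<dots> = (\<integral>z. g z \<partial>distr M NZ Z)"
  proof (rule integral_cong_AE)
    show "(\<lambda>z. \<integral>y. h y z \<partial>distr M NY Y) \<in> borel_measurable (distr M NZ Z)"
      using PP.integrable_snd[OF int] by (rule borel_measurable_integrable)
    have "AE z in distr M NZ Z. Q z"
      using AE_Q by (subst AE_distr_iff) auto
    then show "AE z in distr M NZ Z. (\<integral>y. h y z \<partial>distr M NY Y) = g z"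
      by (rule AE_mp) (auto intro!: AE_I2 hg)
  qed simp
  also have "\<dots> = (\<integral>\<omega>. g (Z \<omega>) \<partial>M)"
    by (subst integral_distr) auto
  finally show ?thesis .
qed

lemma (in prob_space) indep_vars_integral_integrate_out:
  fixes X :: "'i \<Rightarrow> 'a \<Rightarrow> real" and H G :: "('i \<Rightarrow> real) \<Rightarrow> real"
  assumes ind: "indep_vars (\<lambda>_. borel) X I" and i: "i \<in> I"
    and H[measurable]: "H \<in> borel_measurable (PiM I (\<lambda>_. borel))" and H_bounded: "\<And>z. \<bar>H z\<bar> \<le> B"
    and G[measurable]: "G \<in> borel_measurable (PiM (I - {i}) (\<lambda>_. borel))"
    and Q[measurable]: "Measurable.pred (PiM (I - {i}) (\<lambda>_. borel)) Q"
    and AE_Q: "AE \<omega> in M. Q (restrict (\<lambda>j. X j \<omega>) (I - {i}))"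
    and HG: "\<And>z. z \<in> space (PiM (I - {i}) (\<lambda>_. borel)) \<Longrightarrow> Q z \<Longrightarrow> (\<integral>\<omega>. H (z(i := X i \<omega>)) \<partial>M) = G z"
  shows "(\<integral>\<omega>. H (restrict (\<lambda>j. X j \<omega>) I) \<partial>M) = (\<integral>\<omega>. G (restrict (\<lambda>j. X j \<omega>) (I - {i})) \<partial>M)"
proof -
  have ind_i: "indep_var (PiM {i} (\<lambda>_. borel)) (\<lambda>\<omega>. restrict (\<lambda>j. X j \<omega>) {i})
                   (PiM (I - {i}) (\<lambda>_. borel)) (\<lambda>\<omega>. restrict (\<lambda>j. X j \<omega>) (I - {i}))"
    using i by (intro indep_var_restrict[OF ind]) auto
  have I: "I = (I - {i}) \<union> {i}"
    using i by auto
  have upd[measurable]: "(\<lambda>p. (snd p)(i := fst p i))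
      \<in> (PiM {i} (\<lambda>_. borel) \<Otimes>\<^sub>M PiM (I - {i}) (\<lambda>_. borel)) \<rightarrow>\<^sub>M PiM I (\<lambda>_. borel)"
    by (rule measurable_fun_upd[OF I]) auto
  have upd_const: "(\<lambda>y. z(i := y i)) \<in> PiM {i} (\<lambda>_. borel) \<rightarrow>\<^sub>M PiM I (\<lambda>_. borel)"
    if "z \<in> space (PiM (I - {i}) (\<lambda>_. borel))" for z
    using that by (intro measurable_fun_upd[OF I]) auto
  have "restrict (\<lambda>j. X j \<omega>) I = (restrict (\<lambda>j. X j \<omega>) (I - {i}))(i := X i \<omega>)" for \<omega>
    using i by (auto simp: restrict_def)
  then have "(\<integral>\<omega>. H (restrict (\<lambda>j. X j \<omega>) I) \<partial>M)
               = (\<integral>\<omega>. (\<lambda>y z. H (z(i := y i))) (restrict (\<lambda>j. X j \<omega>) {i}) (restrict (\<lambda>j. X j \<omega>) (I - {i})) \<partial>M)"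
    by simp
  also have "\<dots> = (\<integral>\<omega>. G (restrict (\<lambda>j. X j \<omega>) (I - {i})) \<partial>M)"
  proof (rule indep_var_integral_iterated[OF ind_i, where h = "\<lambda>y z. H (z(i := y i))" and B = B])
    show "(\<lambda>(y, z). H (z(i := y i))) \<in> borel_measurable (PiM {i} (\<lambda>_. borel) \<Otimes>\<^sub>M PiM (I - {i}) (\<lambda>_. borel))"
      using measurable_comp[OF upd H] by (simp add: comp_def case_prod_beta)
  next
    fix z assume z: "z \<in> space (PiM (I - {i}) (\<lambda>_. borel))" and "Q z"
    have "(\<integral>y. H (z(i := y i)) \<partial>distr M (PiM {i} (\<lambda>_. borel)) (\<lambda>\<omega>. restrict (\<lambda>j. X j \<omega>) {i}))
            = (\<integral>\<omega>. H (z(i := X i \<omega>)) \<partial>M)"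
      using measurable_comp[OF upd_const[OF z] H] indep_var_rv1[OF ind_i]
      by (subst integral_distr) (auto simp: comp_def)
    then show "(\<integral>y. H (z(i := y i)) \<partial>distr M (PiM {i} (\<lambda>_. borel)) (\<lambda>\<omega>. restrict (\<lambda>j. X j \<omega>) {i})) = G z"
      using HG[OF z \<open>Q z\<close>] by simp
  qed (use H_bounded G Q AE_Q in auto)
  finally show ?thesis .
qed

lemma (in prob_space) exponential_distributed_AE_nonneg:
  assumes "distributed M lborel Y (exponential_density l)"
  shows "AE \<omega> in M. 0 \<le> Y \<omega>"
  by (subst distributed_AE2[OF assms]) (auto simp: exponential_density_def)

lemma (in prob_space) exponential_distributed_prob_ge:
  assumes D: "distributed M lborel Y (exponential_density l)" and l: "0 < l"
  shows "prob {\<omega> \<in> space M. s \<le> Y \<omega>} = exp (- max s 0 * l)"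
proof (cases "s \<le> 0")
  case True
  have "AE \<omega> in M. s \<le> Y \<omega>"
    using exponential_distributed_AE_nonneg[OF D] by eventually_elim (use True in auto)
  then have "prob {\<omega> \<in> space M. s \<le> Y \<omega>} = 1"
    using D by (subst prob_Collect_eq_1) (auto simp: exponential_distributed_iff[OF l])
  then show ?thesis
    using True by simp
next
  case False
  have [measurable]: "Y \<in> borel_measurable M"
    using D by (simp add: exponential_distributed_iff[OF l])
  have "AE \<omega> in M. Y \<omega> \<noteq> s"
    by (subst distributed_AE2[OF D]) (auto intro: AE_mp[OF AE_lborel_singleton[of s]])
  then have "prob {\<omega> \<in> space M. s \<le> Y \<omega>} = prob {\<omega> \<in> space M. s < Y \<omega>}"
    by (intro finite_measure_eq_AE) (auto elim!: AE_mp)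
  also have "\<dots> = exp (- s * l)"
    using exponential_distributedD_gt[OF D _ l, of s] False by simp
  finally show ?thesis
    using False by simp
qed

lemma (in prob_space) integral_if_one_zero:
  assumes "{\<omega> \<in> space M. P \<omega>} \<in> events"
  shows "(\<integral>\<omega>. (if P \<omega> then 1 else 0) \<partial>M) = prob {\<omega> \<in> space M. P \<omega>}"
proof -
  have "(\<integral>\<omega>. (if P \<omega> then 1 else 0) \<partial>M) = (\<integral>\<omega>. indicator {\<omega> \<in> space M. P \<omega>} \<omega> \<partial>M)"
    by (intro Bochner_Integration.integral_cong) (auto simp: indicator_def)
  also have "\<dots> = prob ({\<omega> \<in> space M. P \<omega>} \<inter> space M)"
    by simp
  finally show ?thesis
    by (simp add: Int_absorb2)
qed

lemma (in prob_space) exponential_distributed_moments: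
  assumes D: "distributed M lborel Y (exponential_density (1 / \<xi>))" and \<xi>: "0 < \<xi>"
  shows "integrable M (\<lambda>\<omega>. Y \<omega> ^ n)"
    and "expectation Y = \<xi>"
    and "expectation (\<lambda>\<omega>. (Y \<omega>)\<^sup>2) = 2 * \<xi>\<^sup>2"
proof -
  have l: "0 < 1 / \<xi>"
    using \<xi> by simp
  show "integrable M (\<lambda>\<omega>. Y \<omega> ^ n)"
    by (rule erlang_ith_moment_integrable[OF l D])
  show "expectation Y = \<xi>"
    using exponential_distributed_expectation[OF l D] by simp
  show "expectation (\<lambda>\<omega>. (Y \<omega>)\<^sup>2) = 2 * \<xi>\<^sup>2"
    using erlang_ith_moment[OF l D, of 2] \<xi> by (simp add: power_divide)
qed

lemma (in prob_space) indep_vars_exponential_product_moment: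
  assumes ind: "indep_vars (\<lambda>_. borel) X I" and a: "a \<in> I" and b: "b \<in> I"
    and Da: "distributed M lborel (X a) (exponential_density (1 / \<xi>a))" and \<xi>a: "0 < \<xi>a"
    and Db: "distributed M lborel (X b) (exponential_density (1 / \<xi>b))" and \<xi>b: "0 < \<xi>b"
  shows "integrable M (\<lambda>\<omega>. X a \<omega> * X b \<omega>)"
    and "expectation (\<lambda>\<omega>. X a \<omega> * X b \<omega>) = \<xi>a * \<xi>b + (if a = b then \<xi>a\<^sup>2 else 0)"
proof -
  have int1: "integrable M (X c)" if "distributed M lborel (X c) (exponential_density (1 / \<xi>))" "0 < \<xi>"
    for c \<xi>
    using exponential_distributed_moments(1)[OF that, of 1] by simp
  have "integrable M (\<lambda>\<omega>. X a \<omega> * X b \<omega>)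
          \<and> expectation (\<lambda>\<omega>. X a \<omega> * X b \<omega>) = \<xi>a * \<xi>b + (if a = b then \<xi>a\<^sup>2 else 0)"
  proof (cases "a = b")
    case True
    moreover have "\<xi>a = \<xi>b"
      using Da Db \<xi>a \<xi>b True exponential_distributed_moments(2)[OF Da \<xi>a] exponential_distributed_moments(2)[OF Db \<xi>b]
      by simp
    ultimately show ?thesis
      using exponential_distributed_moments(1)[OF Da \<xi>a, of 2] exponential_distributed_moments(3)[OF Da \<xi>a]
      by (simp add: power2_eq_square)
  next
    case False
    have "indep_var borel ((\<lambda>f. f a) \<circ> (\<lambda>\<omega>. restrict (\<lambda>i. X i \<omega>) {a}))
                    borel ((\<lambda>f. f b) \<circ> (\<lambda>\<omega>. restrict (\<lambda>i. X i \<omega>) {b}))"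
      using a b False by (intro indep_var_compose[OF indep_var_restrict[OF ind]]) auto
    then have ind_ab: "indep_var borel (X a) borel (X b)"
      by (simp add: comp_def)
    show ?thesis
      using indep_var_lebesgue_integral[OF ind_ab int1[OF Da \<xi>a] int1[OF Db \<xi>b]]
        indep_var_integrable[OF ind_ab int1[OF Da \<xi>a] int1[OF Db \<xi>b]]
        exponential_distributed_moments(2)[OF Da \<xi>a] exponential_distributed_moments(2)[OF Db \<xi>b] False
      by simp
  qed
  then show "integrable M (\<lambda>\<omega>. X a \<omega> * X b \<omega>)"
    and "expectation (\<lambda>\<omega>. X a \<omega> * X b \<omega>) = \<xi>a * \<xi>b + (if a = b then \<xi>a\<^sup>2 else 0)"
    by auto
qed

lemma integral_sum_sum:
  fixes f :: "'i \<Rightarrow> 'j \<Rightarrow> 'a \<Rightarrow> real"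
  assumes "\<And>j k. j \<in> A \<Longrightarrow> k \<in> B \<Longrightarrow> integrable M (f j k)"
  shows "(\<integral>x. (\<Sum>j\<in>A. \<Sum>k\<in>B. f j k x) \<partial>M) = (\<Sum>j\<in>A. \<Sum>k\<in>B. \<integral>x. f j k x \<partial>M)"
proof -
  have "(\<integral>x. (\<Sum>j\<in>A. \<Sum>k\<in>B. f j k x) \<partial>M) = (\<Sum>j\<in>A. \<integral>x. (\<Sum>k\<in>B. f j k x) \<partial>M)"
    using assms by (intro Bochner_Integration.integral_sum Bochner_Integration.integrable_sum) auto
  also have "\<dots> = (\<Sum>j\<in>A. \<Sum>k\<in>B. \<integral>x. f j k x \<partial>M)"
    using assms by (intro sum.cong refl Bochner_Integration.integral_sum) auto
  finally show ?thesis .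
qed

lemma sum_power3_le:
  fixes y :: "'i \<Rightarrow> real"
  assumes S: "finite S" and nonneg: "\<And>k. k \<in> S \<Longrightarrow> 0 \<le> y k"
  shows "(\<Sum>k\<in>S. y k) ^ 3 \<le> real (card S) ^ 3 * (\<Sum>k\<in>S. y k ^ 3)"
proof (cases "S = {}")
  case False
  define m where "m = Max (y ` S)"
  have "m \<in> y ` S"
    using S False by (simp add: m_def)
  then obtain k0 where k0: "k0 \<in> S" "m = y k0"
    by blast
  have "(\<Sum>k\<in>S. y k) \<le> real (card S) * m"
    using S by (intro sum_bounded_above) (auto simp: m_def)
  then have "(\<Sum>k\<in>S. y k) ^ 3 \<le> (real (card S) * m) ^ 3"
    using nonneg by (intro power_mono) (auto intro: sum_nonneg)
  also have "\<dots> \<le> real (card S) ^ 3 * (\<Sum>k\<in>S. y k ^ 3)"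
    using k0 S nonneg by (auto simp: power_mult_distrib intro!: mult_left_mono member_le_sum)
  finally show ?thesis .
qed simp

lemma one_add_add_power3_le:
  fixes g r :: real
  assumes "0 \<le> g" "0 \<le> r"
  shows "(1 + g + r) ^ 3 \<le> 27 * (1 + g ^ 3 + r ^ 3)"
proof -
  define m where "m = max 1 (max g r)"
  have "(1 + g + r) ^ 3 \<le> (3 * m) ^ 3"
    using assms by (intro power_mono) (auto simp: m_def)
  also have "\<dots> \<le> 27 * (1 + g ^ 3 + r ^ 3)"
    using assms by (auto simp: m_def max_def power_mult_distrib)
  finally show ?thesis .
qed

lemma one_add_sum_add_sum_power3_le:
  fixes y u :: "'i \<Rightarrow> real"
  assumes "finite A" "finite B" "\<And>k. k \<in> A \<Longrightarrow> 0 \<le> y k" "\<And>k. k \<in> B \<Longrightarrow> 0 \<le> u k"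
  shows "(1 + (\<Sum>k\<in>A. y k) + (\<Sum>k\<in>B. u k)) ^ 3
           \<le> 27 * (1 + real (card A) ^ 3 * (\<Sum>k\<in>A. y k ^ 3) + real (card B) ^ 3 * (\<Sum>k\<in>B. u k ^ 3))"
proof -
  have "(1 + (\<Sum>k\<in>A. y k) + (\<Sum>k\<in>B. u k)) ^ 3 \<le> 27 * (1 + (\<Sum>k\<in>A. y k) ^ 3 + (\<Sum>k\<in>B. u k) ^ 3)"
    using assms by (intro one_add_add_power3_le sum_nonneg) auto
  also have "\<dots> \<le> 27 * (1 + real (card A) ^ 3 * (\<Sum>k\<in>A. y k ^ 3) + real (card B) ^ 3 * (\<Sum>k\<in>B. u k ^ 3))"
    using sum_power3_le[of A y] sum_power3_le[of B u] assms by simp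
  finally show ?thesis .
qed

section \<open>The relay model\<close>

locale relay_outage = prob_space M
  for M :: "'a measure" and X :: "rv \<Rightarrow> 'a \<Rightarrow> real" and LT LR :: nat
    and gb0 gb1 gb2 w1 w2 :: real and xiT xiR :: "nat \<Rightarrow> real" +
  assumes indep: "indep_vars (\<lambda>_. borel) X ({G0, G1, G2} \<union> ITk ` {1..LT} \<union> IRk ` {1..LR})"
    and gb0_pos: "0 < gb0" and gb1_pos: "0 < gb1" and gb2_pos: "0 < gb2"
    and w1_pos: "0 < w1" and w2_pos: "0 < w2"
    and xiT_pos: "\<And>k. k \<in> {1..LT} \<Longrightarrow> 0 < xiT k"
    and xiR_pos: "\<And>k. k \<in> {1..LR} \<Longrightarrow> 0 < xiR k"
    and G0_exponential: "distributed M lborel (X G0) (exponential_density (1 / gb0))"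
    and G1_exponential: "distributed M lborel (X G1) (exponential_density (1 / gb1))"
    and G2_exponential: "distributed M lborel (X G2) (exponential_density (1 / gb2))"
    and ITk_exponential: "\<And>k. k \<in> {1..LT} \<Longrightarrow> distributed M lborel (X (ITk k)) (exponential_density (1 / xiT k))"
    and IRk_exponential: "\<And>k. k \<in> {1..LR} \<Longrightarrow> distributed M lborel (X (IRk k)) (exponential_density (1 / xiR k))"
begin

text \<open>All quantities are functions of a sample vector \<open>z :: rv \<Rightarrow> real\<close>, evaluated at
  \<open>\<lambda>i. X i \<omega>\<close>; this lets the variables be integrated out one coordinate at a time.\<close>

definition intf_T :: "(rv \<Rightarrow> real) \<Rightarrow> real" where
  "intf_T z = (\<Sum>k\<in>{1..LT}. z (ITk k))"

definition intf_R :: "(rv \<Rightarrow> real) \<Rightarrow> real" where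
  "intf_R z = (\<Sum>k\<in>{1..LR}. z (IRk k))"

definition sinr_ub :: "(rv \<Rightarrow> real) \<Rightarrow> real" where
  "sinr_ub z = z G0 / (intf_T z + 1)
     + min (z G1 / (intf_T z + 1)) (w2 * z G2 / (intf_R z + w1 * intf_T z + w1 + 1))"

text \<open>Given the interference, \<open>min (G1 / (intf_T + 1)) (w2 G2 / (intf_R + w1 intf_T + w1 + 1))\<close>
  is exponential with this rate.\<close>
definition min_rate :: "(rv \<Rightarrow> real) \<Rightarrow> real" where
  "min_rate z = (intf_T z + 1) / gb1 + (intf_R z + w1 * intf_T z + w1 + 1) / (w2 * gb2)"

text \<open>\<open>Pr (\<gamma> \<le> sinr_ub)\<close> conditioned on \<open>G0\<close>, \<open>G1\<close> and the interference, and below conditioned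
  on \<open>G0\<close> and the interference only.\<close>
definition ccdf_given_G01 :: "real \<Rightarrow> (rv \<Rightarrow> real) \<Rightarrow> real" where
  "ccdf_given_G01 \<gamma> z =
     (if \<gamma> - z G0 / (intf_T z + 1) \<le> z G1 / (intf_T z + 1)
      then exp (- max ((intf_R z + w1 * intf_T z + w1 + 1) * (\<gamma> - z G0 / (intf_T z + 1)) / w2) 0 * (1 / gb2))
      else 0)"

text \<open>The rate is clipped at \<open>0\<close> only to keep the function bounded off the almost-sure event
  where the interference is nonnegative.\<close>
definition ccdf_given_G0 :: "real \<Rightarrow> (rv \<Rightarrow> real) \<Rightarrow> real" where
  "ccdf_given_G0 \<gamma> z = exp (- max (\<gamma> - z G0 / (intf_T z + 1)) 0 * max 0 (min_rate z))"

abbreviation rvs :: "rv set" where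
  "rvs \<equiv> {G0, G1, G2} \<union> ITk ` {1..LT} \<union> IRk ` {1..LR}"

lemma intf_restrict:
  "ITk ` {1..LT} \<subseteq> S \<Longrightarrow> intf_T (restrict z S) = intf_T z"
  "IRk ` {1..LR} \<subseteq> S \<Longrightarrow> intf_R (restrict z S) = intf_R z"
  unfolding intf_T_def intf_R_def by (auto intro!: sum.cong)

lemma intf_fun_upd [simp]:
  "i \<in> {G0, G1, G2} \<Longrightarrow> intf_T (z(i := y)) = intf_T z"
  "i \<in> {G0, G1, G2} \<Longrightarrow> intf_R (z(i := y)) = intf_R z"
  unfolding intf_T_def intf_R_def by (auto intro!: sum.cong)

lemma intf_measurable:
  "ITk ` {1..LT} \<subseteq> S \<Longrightarrow> intf_T \<in> borel_measurable (PiM S (\<lambda>_. borel))"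
  "IRk ` {1..LR} \<subseteq> S \<Longrightarrow> intf_R \<in> borel_measurable (PiM S (\<lambda>_. borel))"
  unfolding intf_T_def intf_R_def by (auto intro!: borel_measurable_sum measurable_component_singleton)

lemma X_measurable [measurable]: "i \<in> rvs \<Longrightarrow> X i \<in> borel_measurable M"
  using indep by (auto simp: indep_vars_def)

lemma interferers_nonneg_AE:
  "AE \<omega> in M. (\<forall>k\<in>{1..LT}. 0 \<le> X (ITk k) \<omega>) \<and> (\<forall>k\<in>{1..LR}. 0 \<le> X (IRk k) \<omega>)"
proof -
  have "AE \<omega> in M. \<forall>k\<in>{1..LT}. 0 \<le> X (ITk k) \<omega>"
    by (intro AE_finite_allI) (auto intro: exponential_distributed_AE_nonneg[OF ITk_exponential])
  moreover have "AE \<omega> in M. \<forall>k\<in>{1..LR}. 0 \<le> X (IRk k) \<omega>"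
    by (intro AE_finite_allI) (auto intro: exponential_distributed_AE_nonneg[OF IRk_exponential])
  ultimately show ?thesis
    by eventually_elim auto
qed

lemma intf_nonneg_AE: "AE \<omega> in M. 0 \<le> intf_T (\<lambda>i. X i \<omega>) \<and> 0 \<le> intf_R (\<lambda>i. X i \<omega>)"
  using interferers_nonneg_AE by eventually_elim (auto simp: intf_T_def intf_R_def intro!: sum_nonneg)

text \<open>\<open>HG\<close> is only required where the interference is nonnegative, which holds almost surely.\<close>
lemma integral_integrate_out:
  fixes H G :: "(rv \<Rightarrow> real) \<Rightarrow> real"
  assumes S: "S \<subseteq> rvs" "i \<in> S" "ITk ` {1..LT} \<union> IRk ` {1..LR} \<subseteq> S - {i}"
    and H: "H \<in> borel_measurable (PiM S (\<lambda>_. borel))" "\<And>z. \<bar>H z\<bar> \<le> B"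
      "\<And>f. H (restrict f S) = H f"
    and G: "G \<in> borel_measurable (PiM (S - {i}) (\<lambda>_. borel))" "\<And>f. G (restrict f (S - {i})) = G f"
    and HG: "\<And>z. 0 \<le> intf_T z \<Longrightarrow> 0 \<le> intf_R z \<Longrightarrow> (\<integral>\<omega>. H (z(i := X i \<omega>)) \<partial>M) = G z"
  shows "(\<integral>\<omega>. H (\<lambda>j. X j \<omega>) \<partial>M) = (\<integral>\<omega>. G (\<lambda>j. X j \<omega>) \<partial>M)"
proof -
  have "(\<integral>\<omega>. H (restrict (\<lambda>j. X j \<omega>) S) \<partial>M) = (\<integral>\<omega>. G (restrict (\<lambda>j. X j \<omega>) (S - {i})) \<partial>M)"
  proof (rule indep_vars_integral_integrate_out[OF indep_vars_subset[OF indep S(1)] S(2) H(1,2) G(1)])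
    show "Measurable.pred (PiM (S - {i}) (\<lambda>_. borel)) (\<lambda>z. 0 \<le> intf_T z \<and> 0 \<le> intf_R z)"
    proof -
      have [measurable]: "intf_T \<in> borel_measurable (PiM (S - {i}) (\<lambda>_. borel))"
          "intf_R \<in> borel_measurable (PiM (S - {i}) (\<lambda>_. borel))"
        using intf_measurable[of "S - {i}"] S(3) by auto
      show ?thesis
        by measurable
    qed
    show "AE \<omega> in M. 0 \<le> intf_T (restrict (\<lambda>j. X j \<omega>) (S - {i})) \<and> 0 \<le> intf_R (restrict (\<lambda>j. X j \<omega>) (S - {i}))"
      using intf_nonneg_AE S(3) by (simp add: intf_restrict)
  qed (use HG in auto)
  then show ?thesis
    using H(3) G(2) by simp
qed

lemma sinr_ub_fun_upd_G2:
  assumes "0 \<le> intf_T z" "0 \<le> intf_R z"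
  shows "\<gamma> \<le> sinr_ub (z(G2 := y))
    \<longleftrightarrow> \<gamma> - z G0 / (intf_T z + 1) \<le> z G1 / (intf_T z + 1)
        \<and> (intf_R z + w1 * intf_T z + w1 + 1) * (\<gamma> - z G0 / (intf_T z + 1)) / w2 \<le> y"
proof -
  define c where "c = intf_R z + w1 * intf_T z + w1 + 1"
  define t where "t = \<gamma> - z G0 / (intf_T z + 1)"
  have "0 < c"
    using assms w1_pos by (simp add: c_def add_nonneg_pos)
  then have "t \<le> w2 * y / c \<longleftrightarrow> c * t / w2 \<le> y"
    using w2_pos by (simp add: pos_le_divide_eq pos_divide_le_eq mult.commute)
  moreover have "sinr_ub (z(G2 := y)) = z G0 / (intf_T z + 1) + min (z G1 / (intf_T z + 1)) (w2 * y / c)"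
    by (simp add: sinr_ub_def c_def)
  moreover have "\<gamma> \<le> a + min b d \<longleftrightarrow> \<gamma> - a \<le> b \<and> \<gamma> - a \<le> d" for a b d :: real
    by auto
  ultimately show ?thesis
    unfolding c_def[symmetric] by (simp add: t_def)
qed

lemma prob_sinr_ub_ge:
  "prob {\<omega> \<in> space M. \<gamma> \<le> sinr_ub (\<lambda>i. X i \<omega>)} = (\<integral>\<omega>. ccdf_given_G01 \<gamma> (\<lambda>i. X i \<omega>) \<partial>M)"
proof -
  have [measurable]: "intf_T \<in> borel_measurable (PiM S (\<lambda>_. borel))" "intf_R \<in> borel_measurable (PiM S (\<lambda>_. borel))"
    if "S \<in> {rvs, rvs - {G2}}" for S
    using intf_measurable[of S] that by auto
  have "prob {\<omega> \<in> space M. \<gamma> \<le> sinr_ub (\<lambda>i. X i \<omega>)} = (\<integral>\<omega>. (if \<gamma> \<le> sinr_ub (\<lambda>i. X i \<omega>) then 1 else 0) \<partial>M)"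
    by (rule integral_if_one_zero[symmetric]) (simp add: sinr_ub_def intf_T_def intf_R_def)
  also have "\<dots> = (\<integral>\<omega>. ccdf_given_G01 \<gamma> (\<lambda>i. X i \<omega>) \<partial>M)"
  proof (rule integral_integrate_out[where S = rvs and i = G2 and B = 1])
    show "(\<lambda>z. if \<gamma> \<le> sinr_ub z then 1 else 0) \<in> borel_measurable (PiM rvs (\<lambda>_. borel))"
      unfolding sinr_ub_def by measurable
    show "ccdf_given_G01 \<gamma> \<in> borel_measurable (PiM (rvs - {G2}) (\<lambda>_. borel))"
      unfolding ccdf_given_G01_def by measurable
  next
    fix z :: "rv \<Rightarrow> real"
    assume nonneg: "0 \<le> intf_T z" "0 \<le> intf_R z"
    define t where "t = \<gamma> - z G0 / (intf_T z + 1)"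
    define c where "c = intf_R z + w1 * intf_T z + w1 + 1"
    have "(\<integral>\<omega>. (if \<gamma> \<le> sinr_ub (z(G2 := X G2 \<omega>)) then 1 else 0) \<partial>M)
            = (\<integral>\<omega>. (if t \<le> z G1 / (intf_T z + 1) \<and> c * t / w2 \<le> X G2 \<omega> then 1 else 0) \<partial>M)"
      unfolding sinr_ub_fun_upd_G2[OF nonneg] t_def c_def ..
    also have "\<dots> = ccdf_given_G01 \<gamma> z"
      using exponential_distributed_prob_ge[OF G2_exponential, of "c * t / w2"] gb2_pos
      by (cases "t \<le> z G1 / (intf_T z + 1)") (simp_all add: integral_if_one_zero ccdf_given_G01_def t_def c_def)
    finally show "(\<integral>\<omega>. (if \<gamma> \<le> sinr_ub (z(G2 := X G2 \<omega>)) then 1 else 0) \<partial>M) = ccdf_given_G01 \<gamma> z" .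
  qed (auto simp: sinr_ub_def ccdf_given_G01_def intf_T_def intf_R_def)
  finally show ?thesis .
qed

lemma mult_exp_neg_max_scaled:
  fixes p q t a b :: real
  assumes "0 < p" "0 < q"
  shows "exp (- max (p * t) 0 * a) * exp (- max (q * t) 0 * b) = exp (- max t 0 * (p * a + q * b))"
proof (cases "0 \<le> t")
  case True
  then have "max (p * t) 0 = p * t" "max (q * t) 0 = q * t" "max t 0 = t"
    using assms by simp_all
  then show ?thesis
    by (simp add: mult_exp_exp algebra_simps)
next
  case False
  then have "p * t < 0" "q * t < 0"
    using assms by (simp_all add: mult_pos_neg)
  then show ?thesis
    using False by simp
qed

lemma ccdf_given_bounds:
  "0 \<le> ccdf_given_G01 \<gamma> z" "ccdf_given_G01 \<gamma> z \<le> 1"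
  "0 \<le> ccdf_given_G0 \<gamma> z" "ccdf_given_G0 \<gamma> z \<le> 1"
proof -
  have "exp (- (max a 0 * (1 / gb2))) \<le> 1" "exp (- (max a 0 * max 0 b)) \<le> 1" for a b
    using gb2_pos by simp_all
  then show "0 \<le> ccdf_given_G01 \<gamma> z" "ccdf_given_G01 \<gamma> z \<le> 1"
    "0 \<le> ccdf_given_G0 \<gamma> z" "ccdf_given_G0 \<gamma> z \<le> 1"
    unfolding ccdf_given_G01_def ccdf_given_G0_def by simp_all
qed

lemma integral_ccdf_given_G01:
  "(\<integral>\<omega>. ccdf_given_G01 \<gamma> (\<lambda>i. X i \<omega>) \<partial>M) = (\<integral>\<omega>. ccdf_given_G0 \<gamma> (\<lambda>i. X i \<omega>) \<partial>M)"
proof (rule integral_integrate_out[where S = "rvs - {G2}" and i = G1 and B = 1])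
  have [measurable]: "intf_T \<in> borel_measurable (PiM S (\<lambda>_. borel))" "intf_R \<in> borel_measurable (PiM S (\<lambda>_. borel))"
    if "S \<in> {rvs - {G2}, rvs - {G2} - {G1}}" for S
    using intf_measurable[of S] that by auto
  show "ccdf_given_G01 \<gamma> \<in> borel_measurable (PiM (rvs - {G2}) (\<lambda>_. borel))"
    unfolding ccdf_given_G01_def by measurable
  show "ccdf_given_G0 \<gamma> \<in> borel_measurable (PiM (rvs - {G2} - {G1}) (\<lambda>_. borel))"
    unfolding ccdf_given_G0_def min_rate_def by measurable
next
  fix z :: "rv \<Rightarrow> real"
  assume nonneg: "0 \<le> intf_T z" "0 \<le> intf_R z"
  define s where "s = intf_T z + 1"
  define c where "c = intf_R z + w1 * intf_T z + w1 + 1"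
  define t where "t = \<gamma> - z G0 / s"
  define E where "E = exp (- max (c * t / w2) 0 * (1 / gb2))"
  have "0 < s" "0 < c"
    using nonneg w1_pos by (simp_all add: s_def c_def add_nonneg_pos)
  have "(\<integral>\<omega>. ccdf_given_G01 \<gamma> (z(G1 := X G1 \<omega>)) \<partial>M) = (\<integral>\<omega>. E * (if s * t \<le> X G1 \<omega> then 1 else 0) \<partial>M)"
    using \<open>0 < s\<close> by (intro Bochner_Integration.integral_cong)
      (auto simp: ccdf_given_G01_def E_def t_def s_def c_def pos_le_divide_eq mult.commute)
  also have "\<dots> = E * exp (- max (s * t) 0 * (1 / gb1))"
    using exponential_distributed_prob_ge[OF G1_exponential, of "s * t"] gb1_pos
    by (simp add: integral_if_one_zero)
  also have "\<dots> = exp (- max t 0 * min_rate z)"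
    using mult_exp_neg_max_scaled[of "c / w2" s t "1 / gb2" "1 / gb1"] \<open>0 < c\<close> \<open>0 < s\<close> w2_pos
    by (simp add: E_def min_rate_def s_def c_def field_simps)
  also have "\<dots> = ccdf_given_G0 \<gamma> z"
    using nonneg w1_pos w2_pos gb1_pos gb2_pos
    by (simp add: ccdf_given_G0_def min_rate_def t_def s_def)
  finally show "(\<integral>\<omega>. ccdf_given_G01 \<gamma> (z(G1 := X G1 \<omega>)) \<partial>M) = ccdf_given_G0 \<gamma> z" .
next
  show "\<bar>ccdf_given_G01 \<gamma> z\<bar> \<le> 1" for z
    using ccdf_given_bounds(1,2)[of \<gamma> z] by simp
qed (auto simp: ccdf_given_G01_def ccdf_given_G0_def min_rate_def intf_T_def intf_R_def)

lemma integral_one_minus_ccdf_given_G0: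
  "(\<integral>\<omega>. 1 - ccdf_given_G0 \<gamma> (\<lambda>i. X i \<omega>) \<partial>M)
     = (\<integral>\<omega>. exp_sum_cdf (1 / gb0) (intf_T (\<lambda>i. X i \<omega>) + 1) (min_rate (\<lambda>i. X i \<omega>)) \<gamma> \<partial>M)"
proof (rule integral_integrate_out[where S = "rvs - {G2} - {G1}" and i = G0 and B = 1])
  have [measurable]: "intf_T \<in> borel_measurable (PiM S (\<lambda>_. borel))" "intf_R \<in> borel_measurable (PiM S (\<lambda>_. borel))"
    if "S \<in> {rvs - {G2} - {G1}, rvs - {G2} - {G1} - {G0}}" for S
    using intf_measurable[of S] that by auto
  show "(\<lambda>z. 1 - ccdf_given_G0 \<gamma> z) \<in> borel_measurable (PiM (rvs - {G2} - {G1}) (\<lambda>_. borel))"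
    unfolding ccdf_given_G0_def min_rate_def by measurable
  show "(\<lambda>z. exp_sum_cdf (1 / gb0) (intf_T z + 1) (min_rate z) \<gamma>)
          \<in> borel_measurable (PiM (rvs - {G2} - {G1} - {G0}) (\<lambda>_. borel))"
    unfolding min_rate_def by measurable
next
  fix z :: "rv \<Rightarrow> real"
  assume nonneg: "0 \<le> intf_T z" "0 \<le> intf_R z"
  then have "0 \<le> min_rate z"
    using w1_pos w2_pos gb1_pos gb2_pos by (simp add: min_rate_def)
  then have "(\<integral>\<omega>. 1 - ccdf_given_G0 \<gamma> (z(G0 := X G0 \<omega>)) \<partial>M)
               = (\<integral>\<omega>. (\<lambda>v. 1 - exp (- max (\<gamma> - v / (intf_T z + 1)) 0 * min_rate z)) (X G0 \<omega>) \<partial>M)"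
    by (simp add: ccdf_given_G0_def min_rate_def)
  also have "\<dots> = exp_sum_cdf (1 / gb0) (intf_T z + 1) (min_rate z) \<gamma>"
    unfolding exp_sum_cdf_def
    by (rule distributed_integral[OF G0_exponential, symmetric]) (auto simp: exponential_density_nonneg gb0_pos)
  finally show "(\<integral>\<omega>. 1 - ccdf_given_G0 \<gamma> (z(G0 := X G0 \<omega>)) \<partial>M)
                  = exp_sum_cdf (1 / gb0) (intf_T z + 1) (min_rate z) \<gamma>" .
next
  show "\<bar>1 - ccdf_given_G0 \<gamma> z\<bar> \<le> 1" for z
    using ccdf_given_bounds(3,4)[of \<gamma> z] by simp
qed (auto simp: ccdf_given_G0_def min_rate_def intf_T_def intf_R_def)

lemma outage_cdf_eq_integral:
  "measure M {\<omega> \<in> space M. sinr_ub (\<lambda>i. X i \<omega>) < \<gamma>}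
     = (\<integral>\<omega>. exp_sum_cdf (1 / gb0) (intf_T (\<lambda>i. X i \<omega>) + 1) (min_rate (\<lambda>i. X i \<omega>)) \<gamma> \<partial>M)"
proof -
  have [measurable]: "(\<lambda>\<omega>. intf_T (\<lambda>i. X i \<omega>)) \<in> borel_measurable M" "(\<lambda>\<omega>. intf_R (\<lambda>i. X i \<omega>)) \<in> borel_measurable M"
    unfolding intf_T_def intf_R_def by measurable
  have [measurable]: "(\<lambda>\<omega>. sinr_ub (\<lambda>i. X i \<omega>)) \<in> borel_measurable M"
    unfolding sinr_ub_def by measurable
  have "{\<omega> \<in> space M. sinr_ub (\<lambda>i. X i \<omega>) < \<gamma>} = space M - {\<omega> \<in> space M. \<gamma> \<le> sinr_ub (\<lambda>i. X i \<omega>)}"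
    by auto
  then have "measure M {\<omega> \<in> space M. sinr_ub (\<lambda>i. X i \<omega>) < \<gamma>}
               = 1 - (\<integral>\<omega>. ccdf_given_G0 \<gamma> (\<lambda>i. X i \<omega>) \<partial>M)"
    by (simp add: prob_compl prob_sinr_ub_ge integral_ccdf_given_G01)
  also have "\<dots> = (\<integral>\<omega>. 1 - ccdf_given_G0 \<gamma> (\<lambda>i. X i \<omega>) \<partial>M)"
  proof -
    have "integrable M (\<lambda>\<omega>. ccdf_given_G0 \<gamma> (\<lambda>i. X i \<omega>))"
    proof (rule integrable_const_bound[where B = 1])
      show "(\<lambda>\<omega>. ccdf_given_G0 \<gamma> (\<lambda>i. X i \<omega>)) \<in> borel_measurable M"
        unfolding ccdf_given_G0_def min_rate_def by measurable
    qed (use ccdf_given_bounds(3,4) in simp)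
    then show ?thesis
      by (simp add: prob_space)
  qed
  finally show ?thesis
    unfolding integral_one_minus_ccdf_given_G0 .
qed

lemma expectation_intf:
  "integrable M (\<lambda>\<omega>. intf_T (\<lambda>i. X i \<omega>))" "expectation (\<lambda>\<omega>. intf_T (\<lambda>i. X i \<omega>)) = (\<Sum>k\<in>{1..LT}. xiT k)"
  "integrable M (\<lambda>\<omega>. intf_R (\<lambda>i. X i \<omega>))" "expectation (\<lambda>\<omega>. intf_R (\<lambda>i. X i \<omega>)) = (\<Sum>k\<in>{1..LR}. xiR k)"
  using exponential_distributed_moments(1)[OF ITk_exponential xiT_pos, of _ 1]
    exponential_distributed_moments(2)[OF ITk_exponential xiT_pos]
    exponential_distributed_moments(1)[OF IRk_exponential xiR_pos, of _ 1]
    exponential_distributed_moments(2)[OF IRk_exponential xiR_pos]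
  by (auto simp: intf_T_def intf_R_def)

lemma expectation_intf_products:
  "integrable M (\<lambda>\<omega>. (intf_T (\<lambda>i. X i \<omega>))\<^sup>2)"
  "expectation (\<lambda>\<omega>. (intf_T (\<lambda>i. X i \<omega>))\<^sup>2) = (\<Sum>k\<in>{1..LT}. xiT k)\<^sup>2 + (\<Sum>k\<in>{1..LT}. (xiT k)\<^sup>2)"
  "integrable M (\<lambda>\<omega>. intf_T (\<lambda>i. X i \<omega>) * intf_R (\<lambda>i. X i \<omega>))"
  "expectation (\<lambda>\<omega>. intf_T (\<lambda>i. X i \<omega>) * intf_R (\<lambda>i. X i \<omega>)) = (\<Sum>k\<in>{1..LT}. xiT k) * (\<Sum>k\<in>{1..LR}. xiR k)"
proof -
  note TT = indep_vars_exponential_product_moment[OF indep _ _ ITk_exponential xiT_pos ITk_exponential xiT_pos]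
  note TR = indep_vars_exponential_product_moment[OF indep _ _ ITk_exponential xiT_pos IRk_exponential xiR_pos]
  have sq: "(intf_T z)\<^sup>2 = (\<Sum>j\<in>{1..LT}. \<Sum>k\<in>{1..LT}. z (ITk j) * z (ITk k))" for z
    unfolding intf_T_def power2_eq_square sum_product ..
  have prod: "intf_T z * intf_R z = (\<Sum>j\<in>{1..LT}. \<Sum>k\<in>{1..LR}. z (ITk j) * z (IRk k))" for z
    unfolding intf_T_def intf_R_def sum_product ..
  show "integrable M (\<lambda>\<omega>. (intf_T (\<lambda>i. X i \<omega>))\<^sup>2)"
    unfolding sq using TT by (auto intro!: Bochner_Integration.integrable_sum)
  have "expectation (\<lambda>\<omega>. (intf_T (\<lambda>i. X i \<omega>))\<^sup>2)
          = (\<Sum>j\<in>{1..LT}. \<Sum>k\<in>{1..LT}. expectation (\<lambda>\<omega>. X (ITk j) \<omega> * X (ITk k) \<omega>))"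
    unfolding sq by (rule integral_sum_sum) (use TT in auto)
  also have "\<dots> = (\<Sum>j\<in>{1..LT}. \<Sum>k\<in>{1..LT}. xiT j * xiT k + (if j = k then (xiT j)\<^sup>2 else 0))"
    using TT by (intro sum.cong refl) auto
  also have "\<dots> = (\<Sum>k\<in>{1..LT}. xiT k)\<^sup>2 + (\<Sum>k\<in>{1..LT}. (xiT k)\<^sup>2)"
    by (simp add: sum.distrib power2_eq_square sum_product)
  finally show "expectation (\<lambda>\<omega>. (intf_T (\<lambda>i. X i \<omega>))\<^sup>2) = (\<Sum>k\<in>{1..LT}. xiT k)\<^sup>2 + (\<Sum>k\<in>{1..LT}. (xiT k)\<^sup>2)" .
  show "integrable M (\<lambda>\<omega>. intf_T (\<lambda>i. X i \<omega>) * intf_R (\<lambda>i. X i \<omega>))"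
    unfolding prod using TR by (auto intro!: Bochner_Integration.integrable_sum)
  have "expectation (\<lambda>\<omega>. intf_T (\<lambda>i. X i \<omega>) * intf_R (\<lambda>i. X i \<omega>))
          = (\<Sum>j\<in>{1..LT}. \<Sum>k\<in>{1..LR}. expectation (\<lambda>\<omega>. X (ITk j) \<omega> * X (IRk k) \<omega>))"
    unfolding prod by (rule integral_sum_sum) (use TR in auto)
  also have "\<dots> = (\<Sum>j\<in>{1..LT}. \<Sum>k\<in>{1..LR}. xiT j * xiR k)"
    using TR by (intro sum.cong refl) auto
  finally show "expectation (\<lambda>\<omega>. intf_T (\<lambda>i. X i \<omega>) * intf_R (\<lambda>i. X i \<omega>))
                  = (\<Sum>k\<in>{1..LT}. xiT k) * (\<Sum>k\<in>{1..LR}. xiR k)"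
    by (simp add: sum_product)
qed

text \<open>By \<open>exp_sum_cdf_lower\<close> and \<open>exp_sum_cdf_upper\<close>, the outage probability conditioned on the interference is
  \<open>outage_coeff z / 2 * \<gamma>\<^sup>2\<close> up to an error of at most \<open>outage_remainder z / 6 * \<gamma> ^ 3\<close>.\<close>
definition outage_coeff :: "(rv \<Rightarrow> real) \<Rightarrow> real" where
  "outage_coeff z = (intf_T z + 1) / gb0 * min_rate z"

definition outage_remainder :: "(rv \<Rightarrow> real) \<Rightarrow> real" where
  "outage_remainder z = outage_coeff z * ((intf_T z + 1) / gb0 + min_rate z)"

lemma expectation_outage_coeff:
  defines "ST \<equiv> \<Sum>k\<in>{1..LT}. xiT k" and "QT \<equiv> \<Sum>k\<in>{1..LT}. (xiT k)\<^sup>2" and "SR \<equiv> \<Sum>k\<in>{1..LR}. xiR k"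
  shows "integrable M (\<lambda>\<omega>. outage_coeff (\<lambda>i. X i \<omega>))"
    and "expectation (\<lambda>\<omega>. outage_coeff (\<lambda>i. X i \<omega>))
           = ((1 / gb1 + w1 / (w2 * gb2)) * ((ST + 1)\<^sup>2 + QT) + (ST + 1) * (SR + 1) / (w2 * gb2)) / gb0"
proof -
  define l1 where "l1 = 1 / gb1 + w1 / (w2 * gb2)"
  define c where "c = 1 / (w2 * gb2)"
  have poly: "outage_coeff z = (l1 * (intf_T z)\<^sup>2 + (2 * l1 + c) * intf_T z + c * intf_R z
                                 + c * (intf_T z * intf_R z) + (l1 + c)) / gb0" for z
    using w2_pos gb0_pos gb1_pos gb2_pos
    by (simp add: outage_coeff_def min_rate_def l1_def c_def field_simps power2_eq_square)
  note moments = expectation_intf expectation_intf_products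
  show "integrable M (\<lambda>\<omega>. outage_coeff (\<lambda>i. X i \<omega>))"
    unfolding poly using moments by simp
  have "expectation (\<lambda>\<omega>. outage_coeff (\<lambda>i. X i \<omega>))
          = (l1 * (ST\<^sup>2 + QT) + (2 * l1 + c) * ST + c * SR + c * (ST * SR) + (l1 + c)) / gb0"
    unfolding poly using moments by (simp add: prob_space ST_def QT_def SR_def)
  also have "\<dots> = (l1 * ((ST + 1)\<^sup>2 + QT) + (ST + 1) * (SR + 1) * c) / gb0"
    by (simp add: power2_eq_square algebra_simps)
  finally show "expectation (\<lambda>\<omega>. outage_coeff (\<lambda>i. X i \<omega>))
           = ((1 / gb1 + w1 / (w2 * gb2)) * ((ST + 1)\<^sup>2 + QT) + (ST + 1) * (SR + 1) / (w2 * gb2)) / gb0"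
    by (simp add: l1_def c_def)
qed

lemma outage_remainder_le_cubic:
  assumes nonneg: "0 \<le> intf_T z" "0 \<le> intf_R z"
  defines "ca \<equiv> 1 / gb0" and "cb \<equiv> 1 / gb1 + (1 + w1) / (w2 * gb2)"
  shows "0 \<le> outage_remainder z"
    and "outage_remainder z \<le> ca * cb * (ca + cb) * (1 + intf_T z + intf_R z) ^ 3"
proof -
  define S where "S = 1 + intf_T z + intf_R z"
  define a where "a = (intf_T z + 1) / gb0"
  define b where "b = min_rate z"
  have remainder: "outage_remainder z = a * b * (a + b)"
    by (simp add: outage_remainder_def outage_coeff_def a_def b_def)
  have a: "0 \<le> a" "a \<le> ca * S"
    using nonneg gb0_pos by (simp_all add: a_def ca_def S_def divide_right_mono)
  have "intf_R z + w1 * intf_T z + w1 + 1 \<le> (1 + w1) * S"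
    using nonneg w1_pos by (simp add: S_def algebra_simps)
  then have b: "0 \<le> b" "b \<le> cb * S"
    using nonneg w1_pos w2_pos gb1_pos gb2_pos
    by (simp_all add: b_def cb_def S_def min_rate_def divide_right_mono add_mono add_divide_distrib algebra_simps)
  show "0 \<le> outage_remainder z"
    unfolding remainder using a b by simp
  have "a * b * (a + b) \<le> (ca * S) * (cb * S) * (ca * S + cb * S)"
    using a b by (intro mult_mono add_mono) auto
  then show "outage_remainder z \<le> ca * cb * (ca + cb) * (1 + intf_T z + intf_R z) ^ 3"
    unfolding remainder S_def by (simp add: algebra_simps power3_eq_cube)
qed

lemma integrable_outage_remainder: "integrable M (\<lambda>\<omega>. outage_remainder (\<lambda>i. X i \<omega>))"
proof (rule Bochner_Integration.integrable_bound)
  define C where "C = 1 / gb0 * (1 / gb1 + (1 + w1) / (w2 * gb2)) * (1 / gb0 + (1 / gb1 + (1 + w1) / (w2 * gb2)))"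
  let ?D = "\<lambda>\<omega>. C * (27 * (1 + real LT ^ 3 * (\<Sum>k\<in>{1..LT}. X (ITk k) \<omega> ^ 3)
                              + real LR ^ 3 * (\<Sum>k\<in>{1..LR}. X (IRk k) \<omega> ^ 3)))"
  have "integrable M (\<lambda>\<omega>. \<Sum>k\<in>{1..LT}. X (ITk k) \<omega> ^ 3)" "integrable M (\<lambda>\<omega>. \<Sum>k\<in>{1..LR}. X (IRk k) \<omega> ^ 3)"
    using exponential_distributed_moments(1)[OF ITk_exponential xiT_pos, of _ 3]
      exponential_distributed_moments(1)[OF IRk_exponential xiR_pos, of _ 3]
    by (auto intro!: Bochner_Integration.integrable_sum)
  then show "integrable M ?D"
    by simp
  show "(\<lambda>\<omega>. outage_remainder (\<lambda>i. X i \<omega>)) \<in> borel_measurable M"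
    unfolding outage_remainder_def outage_coeff_def min_rate_def intf_T_def intf_R_def by measurable
  have "C \<ge> 0"
    using gb0_pos gb1_pos gb2_pos w1_pos w2_pos by (simp add: C_def)
  show "AE \<omega> in M. norm (outage_remainder (\<lambda>i. X i \<omega>)) \<le> norm (?D \<omega>)"
    using interferers_nonneg_AE
  proof eventually_elim
    case (elim \<omega>)
    let ?g = "intf_T (\<lambda>i. X i \<omega>)" and ?r = "intf_R (\<lambda>i. X i \<omega>)"
    have nonneg: "0 \<le> ?g" "0 \<le> ?r"
      using elim by (auto simp: intf_T_def intf_R_def intro!: sum_nonneg)
    have "(1 + ?g + ?r) ^ 3 \<le> 27 * (1 + real LT ^ 3 * (\<Sum>k\<in>{1..LT}. X (ITk k) \<omega> ^ 3)
                                              + real LR ^ 3 * (\<Sum>k\<in>{1..LR}. X (IRk k) \<omega> ^ 3))"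
      using one_add_sum_add_sum_power3_le[of "{1..LT}" "{1..LR}" "\<lambda>k. X (ITk k) \<omega>" "\<lambda>k. X (IRk k) \<omega>"] elim
      by (simp add: intf_T_def intf_R_def)
    then have "outage_remainder (\<lambda>i. X i \<omega>) \<le> ?D \<omega>"
      using outage_remainder_le_cubic(2)[OF nonneg] mult_left_mono[OF _ \<open>C \<ge> 0\<close>]
      unfolding C_def by fastforce
    then show ?case
      using outage_remainder_le_cubic(1)[OF nonneg] by simp
  qed
qed

lemma outage_cdf_error_bound:
  assumes "0 \<le> \<gamma>"
  shows "\<bar>measure M {\<omega> \<in> space M. sinr_ub (\<lambda>i. X i \<omega>) < \<gamma>}
            - expectation (\<lambda>\<omega>. outage_coeff (\<lambda>i. X i \<omega>)) / 2 * \<gamma>\<^sup>2\<bar>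
         \<le> expectation (\<lambda>\<omega>. outage_remainder (\<lambda>i. X i \<omega>)) / 6 * \<gamma> ^ 3"
proof -
  define q where "q \<omega> = exp_sum_cdf (1 / gb0) (intf_T (\<lambda>i. X i \<omega>) + 1) (min_rate (\<lambda>i. X i \<omega>)) \<gamma>" for \<omega>
  let ?\<Phi> = "\<lambda>\<omega>. outage_coeff (\<lambda>i. X i \<omega>)" and ?\<Psi> = "\<lambda>\<omega>. outage_remainder (\<lambda>i. X i \<omega>)"
  have q_bounds: "AE \<omega> in M. ?\<Phi> \<omega> * \<gamma>\<^sup>2 / 2 - ?\<Psi> \<omega> * \<gamma> ^ 3 / 6 \<le> q \<omega> \<and> q \<omega> \<le> ?\<Phi> \<omega> * \<gamma>\<^sup>2 / 2 \<and> 0 \<le> q \<omega>"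
    using intf_nonneg_AE
  proof eventually_elim
    case (elim \<omega>)
    let ?s = "intf_T (\<lambda>i. X i \<omega>) + 1" and ?b = "min_rate (\<lambda>i. X i \<omega>)"
    have "0 < ?s" "0 \<le> ?b"
      using elim w1_pos w2_pos gb1_pos gb2_pos by (simp_all add: min_rate_def)
    moreover have "?s * (1 / gb0) * ?b = ?\<Phi> \<omega>" "?s * (1 / gb0) * ?b * (?s * (1 / gb0) + ?b) = ?\<Psi> \<omega>"
      by (simp_all add: outage_remainder_def outage_coeff_def)
    ultimately show ?case
      using exp_sum_cdf_lower[of "1 / gb0" ?s ?b \<gamma>] exp_sum_cdf_upper[of "1 / gb0" ?s ?b \<gamma>]
        exp_sum_cdf_nonneg[of "1 / gb0" ?s ?b \<gamma>] gb0_pos assms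
      by (simp add: q_def)
  qed
  have [measurable]: "q \<in> borel_measurable M"
    unfolding q_def min_rate_def intf_T_def intf_R_def by measurable
  have int_\<Phi>: "integrable M (\<lambda>\<omega>. ?\<Phi> \<omega> * \<gamma>\<^sup>2 / 2)"
    using expectation_outage_coeff(1) by simp
  have int_q: "integrable M q"
    by (rule Bochner_Integration.integrable_bound[OF int_\<Phi>]) (use q_bounds in \<open>auto elim!: AE_mp\<close>)
  have "measure M {\<omega> \<in> space M. sinr_ub (\<lambda>i. X i \<omega>) < \<gamma>} - expectation ?\<Phi> / 2 * \<gamma>\<^sup>2
          = (\<integral>\<omega>. q \<omega> - ?\<Phi> \<omega> * \<gamma>\<^sup>2 / 2 \<partial>M)"
    using int_q int_\<Phi> by (simp add: outage_cdf_eq_integral q_def[symmetric])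
  moreover have "(\<integral>\<omega>. q \<omega> - ?\<Phi> \<omega> * \<gamma>\<^sup>2 / 2 \<partial>M) \<le> (\<integral>\<omega>. 0 \<partial>M)"
    using int_q int_\<Phi> q_bounds by (intro integral_mono_AE) (auto elim!: AE_mp)
  moreover have "(\<integral>\<omega>. - (?\<Psi> \<omega> * \<gamma> ^ 3 / 6) \<partial>M) \<le> (\<integral>\<omega>. q \<omega> - ?\<Phi> \<omega> * \<gamma>\<^sup>2 / 2 \<partial>M)"
    using int_q int_\<Phi> integrable_outage_remainder q_bounds
    by (intro integral_mono_AE) (auto elim!: AE_mp)
  ultimately show ?thesis
    by (simp add: abs_le_iff)
qed

lemma outage_cdf_asymptotic:
  "(\<lambda>\<gamma>. measure M {\<omega> \<in> space M. sinr_ub (\<lambda>i. X i \<omega>) < \<gamma>}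
          - expectation (\<lambda>\<omega>. outage_coeff (\<lambda>i. X i \<omega>)) / 2 * \<gamma>\<^sup>2) \<in> o[at_right 0](\<lambda>\<gamma>. \<gamma>\<^sup>2)"
  using outage_cdf_error_bound
  by (intro smallo_square_if_cubic_bound[where C = "expectation (\<lambda>\<omega>. outage_remainder (\<lambda>i. X i \<omega>)) / 6"]) simp

end

theorem lemma3:
  fixes M :: "'a measure" and X :: "rv \<Rightarrow> 'a \<Rightarrow> real"
    and P Om0 Om1 Om2 PIT PIR w1 w2 :: real
    and OmT OmR :: "nat \<Rightarrow> real" and LT LR :: nat
  assumes "prob_space M"
    and "P > 0" and "Om0 > 0" and "Om1 > 0" and "Om2 > 0"
    and "LT \<ge> 1" and "LR \<ge> 1" and "PIT > 0" and "PIR > 0"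
    and "\<forall>k\<in>{1..LT}. OmT k > 0" and "\<forall>k\<in>{1..LR}. OmR k > 0"
    and "inj_on (\<lambda>k. PIT * OmT k) {1..LT}" and "inj_on (\<lambda>k. PIR * OmR k) {1..LR}"
    and "0 < w1" and "w1 < 1" and "0 < w2" and "w2 < 1" and "w1 + w2 = 1"
    and "prob_space.indep_vars M (\<lambda>_. borel) X
           ({G0, G1, G2} \<union> ITk ` {1..LT} \<union> IRk ` {1..LR})"
    and "distributed M lborel (X G0) (exponential_density (1 / (P * Om0)))"
    and "distributed M lborel (X G1) (exponential_density (1 / (P * Om1)))"
    and "distributed M lborel (X G2) (exponential_density (1 / (P * Om2)))"
    and "\<forall>k\<in>{1..LT}. distributed M lborel (X (ITk k)) (exponential_density (1 / (PIT * OmT k)))"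
    and "\<forall>k\<in>{1..LR}. distributed M lborel (X (IRk k)) (exponential_density (1 / (PIR * OmR k)))"
  shows
    "let gb0 = P * Om0; gb1 = P * Om1; gb2 = P * Om2;
         xiT = (\<lambda>k. PIT * OmT k); xiR = (\<lambda>k. PIR * OmR k);
         GT = (\<lambda>x. \<Sum>k\<in>{1..LT}. X (ITk k) x);
         GR = (\<lambda>x. \<Sum>k\<in>{1..LR}. X (IRk k) x);
         Ups = (\<lambda>x. X G0 x / (GT x + 1)
                   + min (X G1 x / (GT x + 1))
                         (w2 * X G2 x / (GR x + w1 * GT x + w1 + 1)));
         F = (\<lambda>\<gamma>. measure M {x \<in> space M. Ups x < \<gamma>});
         l1 = 1 / gb1 + w1 / (w2 * gb2);
         l2 = 1 / gb1 + (w1 + 1) / (w2 * gb2);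
         K = 1 / (2 * gb0) *
             ((\<Sum>j\<in>{1..LT}. \<Sum>k\<in>{1..LR}. phi xiT LT j * phi xiR LR k *
                 (xiR k ^ 2 / (w2 * gb2)) * (xiT j + xiT j ^ 2))
              + (\<Sum>j\<in>{1..LT}. phi xiT LT j *
                 (l2 * xiT j + (l1 + l2) * xiT j ^ 2 + 2 * l1 * xiT j ^ 3)))
     in (\<lambda>\<gamma>. F \<gamma> - K * \<gamma> ^ 2) \<in> o[at_right 0](\<lambda>\<gamma>. \<gamma> ^ 2)"
proof -
  define gb0 gb1 gb2 where "gb0 = P * Om0" and "gb1 = P * Om1" and "gb2 = P * Om2"
  define xiT xiR where "xiT = (\<lambda>k. PIT * OmT k)" and "xiR = (\<lambda>k. PIR * OmR k)"
  define l1 l2 where "l1 = 1 / gb1 + w1 / (w2 * gb2)" and "l2 = 1 / gb1 + (w1 + 1) / (w2 * gb2)"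
  define K where "K = 1 / (2 * gb0) *
             ((\<Sum>j\<in>{1..LT}. \<Sum>k\<in>{1..LR}. phi xiT LT j * phi xiR LR k *
                 (xiR k ^ 2 / (w2 * gb2)) * (xiT j + xiT j ^ 2))
              + (\<Sum>j\<in>{1..LT}. phi xiT LT j *
                 (l2 * xiT j + (l1 + l2) * xiT j ^ 2 + 2 * l1 * xiT j ^ 3)))"
  interpret relay_outage M X LT LR gb0 gb1 gb2 w1 w2 xiT xiR
    by (intro relay_outage.intro[OF assms(1)] relay_outage_axioms.intro)
      (use assms in \<open>simp_all add: gb0_def gb1_def gb2_def xiT_def xiR_def\<close>)
  have xi_pos: "\<forall>k\<in>{1..LT}. 0 < xiT k" "\<forall>k\<in>{1..LR}. 0 < xiR k"
    using xiT_pos xiR_pos by auto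
  have "l2 = l1 + 1 / (w2 * gb2)"
    by (simp add: l1_def l2_def add_divide_distrib)
  then have K: "expectation (\<lambda>\<omega>. outage_coeff (\<lambda>i. X i \<omega>)) / 2 = K"
    using sum_phi_second_order_coefficient[OF assms(6) xi_pos(1) _ assms(7) xi_pos(2), of l2 l1 "w2 * gb2"]
      assms(12,13)
    unfolding expectation_outage_coeff(2) K_def xiT_def[symmetric] xiR_def[symmetric]
    by (simp add: l1_def)
  have sinr_ub: "sinr_ub (\<lambda>i. X i x) = X G0 x / ((\<Sum>k\<in>{1..LT}. X (ITk k) x) + 1)
                   + min (X G1 x / ((\<Sum>k\<in>{1..LT}. X (ITk k) x) + 1))
                         (w2 * X G2 x / ((\<Sum>k\<in>{1..LR}. X (IRk k) x) + w1 * (\<Sum>k\<in>{1..LT}. X (ITk k) x) + w1 + 1))"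
    for x
    by (simp add: sinr_ub_def intf_T_def intf_R_def)
  show ?thesis
    using outage_cdf_asymptotic[unfolded K sinr_ub]
    unfolding Let_def gb0_def[symmetric] gb1_def[symmetric] gb2_def[symmetric] xiT_def[symmetric] xiR_def[symmetric]
      l1_def[symmetric] l2_def[symmetric] K_def[symmetric] .
qed

end
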